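(* Let $k\in\{1,2\}$, $\beta\in\mathbb{R}\setminus\{0\}$, $h>0$, and let $p:\mathbb{R}\to\mathbb{R}$ be a bounded, strictly increasing, smooth function with all derivatives bounded; set $p_j=p(x_j)$. Let $\varphi^h\in\ell^2_h(\mathbb{Z})$ be real-valued and $u=u^h(t)$ the solution of $$\frac{d}{dt}u_j + D_+D_0D_-u_j + \beta\frac{k+1}{k+2}\Big[u_j^k D_0u_j + D_0(u^{k+1})_j\Big] + h\,(D_+D_-D_+D_-u)_j=0,\quad j\in\mathbb{Z},\qquad u(0)=\varphi^h.$$ Then $$\begin{aligned} &\tfrac12\tfrac{d}{dt}\|p^{1/2}u\|_{2,h}^2+(D_-u,D_+p\,D_-u)_h+\tfrac12(D_+u,D_-p\,D_+u)_h+h(D_+D_-u,p\,D_+D_-u)_h\\ &=-\tfrac h2(D_+D_-u,D_+p\,D_-u)_h+\tfrac h2(D_+u\,D_-p,D_+D_-u)_h-(D_-u,u_-\,D_0D_-p)_h\\ &\quad-h(D_+D_-u,D_-p\,D_-u)_h-h(D_+D_-u,D_+p\,D_+u)_h-h(D_+D_-u,u\,D_+D_-p)_h\\ &\quad+\tfrac\beta2\tfrac{k+1}{k+2}\big(u^{k+1},u_+D_+p+u_-D_-p\big)_h. \end{aligned}$$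
   Context: $x_j=jh$; $(z,w)_h=\sum_j h z_jw_j$ and $\|z\|_{2,h}^2=(z,z)_h$; $\ell^2_h(\mathbb{Z})$ is the space of sequences with finite $\|\cdot\|_{2,h}$. $D_+u_j=(u_{j+1}-u_j)/h$, $D_-u_j=(u_j-u_{j-1})/h$, $D_0u_j=(u_{j+1}-u_{j-1})/(2h)$; the operators act on the sequence $p=(p_j)$ as well. Translations: $(u_+)_j=u_{j+1}$, $(u_-)_j=u_{j-1}$. Products and powers of sequences (e.g. $D_+p\,D_-u$, $p^{1/2}u$, $u^{k+1}$) are componentwise. *)

theory Defs
  imports "HOL-Analysis.Analysis"
begin

type_synonym gridfun = "int \<Rightarrow> real"

definition Dplus :: "real \<Rightarrow> gridfun \<Rightarrow> gridfun" where
  "Dplus h u = (\<lambda>j. (u (j + 1) - u j) / h)"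

definition Dminus :: "real \<Rightarrow> gridfun \<Rightarrow> gridfun" where
  "Dminus h u = (\<lambda>j. (u j - u (j - 1)) / h)"

definition Dzero :: "real \<Rightarrow> gridfun \<Rightarrow> gridfun" where
  "Dzero h u = (\<lambda>j. (u (j + 1) - u (j - 1)) / (2 * h))"

definition shiftp :: "gridfun \<Rightarrow> gridfun" where
  "shiftp u = (\<lambda>j. u (j + 1))"

definition shiftm :: "gridfun \<Rightarrow> gridfun" where
  "shiftm u = (\<lambda>j. u (j - 1))"

definition ipr :: "real \<Rightarrow> gridfun \<Rightarrow> gridfun \<Rightarrow> real" where
  "ipr h z w = h * (\<Sum>\<^sub>\<infinity>j\<in>UNIV. z j * w j)"

definition in_l2h :: "gridfun \<Rightarrow> bool" where
  "in_l2h u \<longleftrightarrow> (\<lambda>j. (u j)\<^sup>2) summable_on UNIV"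

definition l2h_norm_sq :: "real \<Rightarrow> gridfun \<Rightarrow> real" where
  "l2h_norm_sq h u = ipr h u u"

definition smooth_bdd :: "(real \<Rightarrow> real) \<Rightarrow> bool" where
  "smooth_bdd p \<longleftrightarrow> (\<forall>n. (\<forall>x. ((deriv ^^ n) p) differentiable (at x))
                          \<and> bounded (range ((deriv ^^ n) p)))"

text \<open>right-hand side operator of the scheme (the ODE reads d/dt u = - F u)\<close>
definition Fop :: "nat \<Rightarrow> real \<Rightarrow> real \<Rightarrow> gridfun \<Rightarrow> gridfun" where
  "Fop k \<beta> h u = (\<lambda>j. Dplus h (Dzero h (Dminus h u)) j
      + \<beta> * ((real k + 1) / (real k + 2)) *
          ((u j) ^ k * Dzero h u j + Dzero h (\<lambda>i. (u i) ^ (k + 1)) j)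
      + h * Dplus h (Dminus h (Dplus h (Dminus h u))) j)"

definition is_solution :: "nat \<Rightarrow> real \<Rightarrow> real \<Rightarrow> real \<Rightarrow> gridfun \<Rightarrow> (real \<Rightarrow> gridfun) \<Rightarrow> bool" where
  "is_solution k \<beta> h T \<phi> u \<longleftrightarrow>
     u 0 = \<phi> \<and>
     (\<forall>t\<in>{0..<T}. in_l2h (u t)) \<and>
     (\<forall>t\<in>{0..<T}. ((\<lambda>s. \<Sum>\<^sub>\<infinity>j\<in>UNIV. (u s j - u t j)\<^sup>2) \<longlongrightarrow> 0) (at t within {0..<T})) \<and>
     (\<forall>t\<in>{0..<T}. \<forall>j. ((\<lambda>s. u s j) has_real_derivative (- Fop k \<beta> h (u t) j)) (at t within {0..<T}))"

end

theory Submission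
  imports Defs
begin

text \<open>Multiplying the scheme by \<open>p u\<close> and summing over the grid gives
  \<open>d/dt (u, p u)\<^sub>h = 2 (p u, - F u)\<^sub>h\<close>, where \<open>F\<close> is the spatial operator of the scheme.
  The identity is then discrete summation by parts: pointwise, the difference of its two sides is
  the forward difference of an explicit flux, which is summable and hence telescopes to zero; only
  the boundedness of \<open>p\<close> enters.

  Differentiating the weighted energy under the infinite sum needs control of \<open>u\<close> in the discrete
  \<open>l\<^sup>2\<close> norm near \<open>t\<close>: continuity bounds \<open>u\<close> uniformly and hence bounds \<open>F u\<close>, and the mean value
  theorem on finite partial sums then makes \<open>u\<close> Lipschitz. The difference quotients are therefore
  bounded and converge componentwise, i.e. weakly, which is enough.\<close>

section \<open>Bounded and square-summable grid functions\<close>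

definition bdd_grid :: "gridfun \<Rightarrow> bool" where
  "bdd_grid f \<longleftrightarrow> (\<exists>M. \<forall>j. \<bar>f j\<bar> \<le> M)"

lemma bdd_gridI: "(\<And>j. \<bar>f j\<bar> \<le> M) \<Longrightarrow> bdd_grid f"
  unfolding bdd_grid_def by blast

lemma bdd_gridE:
  assumes "bdd_grid f"
  obtains M where "0 \<le> M" "\<And>j. \<bar>f j\<bar> \<le> M"
proof -
  obtain M where M: "\<And>j. \<bar>f j\<bar> \<le> M" using assms unfolding bdd_grid_def by blast
  then have "0 \<le> M" using abs_ge_zero order_trans by blast
  then show thesis using that M by blast
qed

lemma bdd_grid_const: "bdd_grid (\<lambda>j. c)"
  unfolding bdd_grid_def by blast

lemma bdd_grid_add: "bdd_grid f \<Longrightarrow> bdd_grid g \<Longrightarrow> bdd_grid (\<lambda>j. f j + g j)"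
  unfolding bdd_grid_def by (metis abs_triangle_ineq add_mono order_trans)

lemma bdd_grid_mult: "bdd_grid f \<Longrightarrow> bdd_grid g \<Longrightarrow> bdd_grid (\<lambda>j. f j * g j)"
proof -
  assume "bdd_grid f" "bdd_grid g"
  then obtain M N where "0 \<le> M" "\<And>j. \<bar>f j\<bar> \<le> M" "\<And>j. \<bar>g j\<bar> \<le> N"
    by (metis bdd_gridE)
  then have "\<bar>f j * g j\<bar> \<le> M * N" for j
    by (simp add: abs_mult mult_mono')
  then show ?thesis by (rule bdd_gridI)
qed

lemma bdd_grid_uminus: "bdd_grid f \<Longrightarrow> bdd_grid (\<lambda>j. - f j)"
  unfolding bdd_grid_def by simp

lemma bdd_grid_diff: "bdd_grid f \<Longrightarrow> bdd_grid g \<Longrightarrow> bdd_grid (\<lambda>j. f j - g j)"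
  using bdd_grid_add[OF _ bdd_grid_uminus, of f g] by simp

lemma bdd_grid_divide: "bdd_grid f \<Longrightarrow> bdd_grid (\<lambda>j. f j / c)"
  using bdd_grid_mult[OF _ bdd_grid_const, of f "1 / c"] by simp

lemma bdd_grid_power: "bdd_grid f \<Longrightarrow> bdd_grid (\<lambda>j. f j ^ n)"
  by (induction n) (simp_all add: bdd_grid_const bdd_grid_mult)

lemma bdd_grid_shift: "bdd_grid f \<Longrightarrow> bdd_grid (\<lambda>j. f (j + a))"
  unfolding bdd_grid_def by blast

lemma bdd_grid_shift_left: "bdd_grid f \<Longrightarrow> bdd_grid (\<lambda>j. f (j - a))"
  unfolding bdd_grid_def by blast

lemma bdd_grid_Dplus: "bdd_grid f \<Longrightarrow> bdd_grid (Dplus h f)"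
  unfolding Dplus_def by (intro bdd_grid_divide bdd_grid_diff bdd_grid_shift)

lemma bdd_grid_Dminus: "bdd_grid f \<Longrightarrow> bdd_grid (Dminus h f)"
  unfolding Dminus_def by (intro bdd_grid_divide bdd_grid_diff bdd_grid_shift_left)

lemma bdd_grid_Dzero: "bdd_grid f \<Longrightarrow> bdd_grid (Dzero h f)"
  unfolding Dzero_def by (intro bdd_grid_divide bdd_grid_diff bdd_grid_shift bdd_grid_shift_left)

lemma bij_betw_int_shift: "bij_betw (\<lambda>j::int. j + a) UNIV UNIV"
  by (rule bij_betwI[where g = "\<lambda>j. j - a"]) auto

lemma summable_on_shift_iff:
  fixes f :: gridfun
  shows "(\<lambda>j. f (j + a)) summable_on UNIV \<longleftrightarrow> f summable_on UNIV"
  using summable_on_reindex_bij_betw[OF bij_betw_int_shift, of f a] by simp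

lemma infsum_shift:
  fixes f :: gridfun
  shows "infsum (\<lambda>j. f (j + a)) UNIV = infsum f UNIV"
  using infsum_reindex_bij_betw[OF bij_betw_int_shift, of f a] by simp

lemma has_sum_shift:
  fixes f :: gridfun
  shows "f summable_on UNIV \<Longrightarrow> ((\<lambda>j. f (j + a)) has_sum infsum f UNIV) UNIV"
  by (metis infsum_shift summable_on_shift_iff has_sum_infsum)

lemma has_sum_telescope:
  fixes f :: gridfun
  assumes "f summable_on UNIV"
  shows "((\<lambda>j. f (j + 1) - f j) has_sum 0) UNIV"
  using has_sum_add[OF has_sum_shift[OF assms, of 1] has_sum_uminusI[OF has_sum_infsum[OF assms]]]
  by simp

lemma has_sum_diff:
  fixes f g :: "'a \<Rightarrow> real"
  shows "(f has_sum a) A \<Longrightarrow> (g has_sum b) A \<Longrightarrow> ((\<lambda>x. f x - g x) has_sum (a - b)) A"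
  using has_sum_add[OF _ has_sum_uminusI[of g]] by fastforce

lemma summable_on_diff:
  fixes f g :: "'a \<Rightarrow> real"
  assumes "f summable_on A" "g summable_on A"
  shows "(\<lambda>x. f x - g x) summable_on A"
  using has_sum_diff[OF has_sum_infsum[OF assms(1)] has_sum_infsum[OF assms(2)]]
  unfolding summable_on_def by blast

lemma summable_on_divide_const:
  fixes f :: "'a \<Rightarrow> real"
  assumes "f summable_on A"
  shows "(\<lambda>x. f x / c) summable_on A"
  using has_sum_divide_const[OF has_sum_infsum[OF assms]] unfolding summable_on_def by blast

lemma has_sum_sum_family:
  fixes f :: "'i \<Rightarrow> 'a \<Rightarrow> real"
  assumes "finite I" "\<And>i. i \<in> I \<Longrightarrow> (f i has_sum s i) A"
  shows "((\<lambda>x. \<Sum>i\<in>I. f i x) has_sum (\<Sum>i\<in>I. s i)) A"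
  using assms by (induction I rule: finite_induct) (auto intro: has_sum_add)

lemma infsum_split_finite:
  fixes f :: gridfun
  assumes "f summable_on UNIV" "finite J"
  shows "infsum f UNIV = sum f J + infsum f (- J)"
proof -
  have "infsum f (J \<union> - J) = infsum f J + infsum f (- J)"
    using assms by (intro infsum_Un_disjoint summable_on_subset_banach[OF assms(1)]) auto
  then show ?thesis using assms by simp
qed

lemma sq_le_infsum: "in_l2h f \<Longrightarrow> (f j)\<^sup>2 \<le> infsum (\<lambda>j. (f j)\<^sup>2) UNIV"
  unfolding in_l2h_def using finite_sum_le_infsum[of "\<lambda>j. (f j)\<^sup>2" UNIV "{j}"] by simp

lemma in_l2h_imp_bdd_grid: "in_l2h f \<Longrightarrow> bdd_grid f"
proof (rule bdd_gridI)
  fix j assume "in_l2h f"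
  then have "sqrt ((f j)\<^sup>2) \<le> sqrt (infsum (\<lambda>j. (f j)\<^sup>2) UNIV)"
    by (intro real_sqrt_le_mono sq_le_infsum)
  then show "\<bar>f j\<bar> \<le> sqrt (infsum (\<lambda>j. (f j)\<^sup>2) UNIV)" by simp
qed

lemma in_l2h_shift: "in_l2h f \<Longrightarrow> in_l2h (\<lambda>j. f (j + a))"
  unfolding in_l2h_def using summable_on_shift_iff[of "\<lambda>j. (f j)\<^sup>2" a] by simp

lemma in_l2h_shift_left: "in_l2h f \<Longrightarrow> in_l2h (\<lambda>j. f (j - a))"
  using in_l2h_shift[of f "- a"] by simp

lemma in_l2h_add:
  assumes "in_l2h f" "in_l2h g"
  shows "in_l2h (\<lambda>j. f j + g j)"
  unfolding in_l2h_def
proof (rule summable_on_comparison_test)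
  show "(\<lambda>j. 2 * (f j)\<^sup>2 + 2 * (g j)\<^sup>2) summable_on UNIV"
    using assms unfolding in_l2h_def by (intro summable_on_add summable_on_cmult_right)
  show "(f j + g j)\<^sup>2 \<le> 2 * (f j)\<^sup>2 + 2 * (g j)\<^sup>2" for j
    using zero_le_power2[of "f j - g j"] by (simp add: power2_eq_square algebra_simps)
qed simp

lemma in_l2h_bdd_mult:
  assumes "bdd_grid b" "in_l2h f"
  shows "in_l2h (\<lambda>j. b j * f j)"
proof -
  obtain M where M: "0 \<le> M" "\<And>j. \<bar>b j\<bar> \<le> M" by (metis assms(1) bdd_gridE)
  have "(\<lambda>j. M\<^sup>2 * (f j)\<^sup>2) summable_on UNIV"
    using assms(2) unfolding in_l2h_def by (rule summable_on_cmult_right)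
  moreover have "(b j * f j)\<^sup>2 \<le> M\<^sup>2 * (f j)\<^sup>2" for j
    using power_mono[OF M(2)[of j] abs_ge_zero, of 2]
    by (simp add: power_mult_distrib mult_right_mono)
  ultimately show ?thesis
    unfolding in_l2h_def by (rule summable_on_comparison_test) simp_all
qed

lemma in_l2h_mult_bdd: "in_l2h f \<Longrightarrow> bdd_grid b \<Longrightarrow> in_l2h (\<lambda>j. f j * b j)"
  using in_l2h_bdd_mult[of b f] by (simp add: mult.commute)

lemma in_l2h_cmult: "in_l2h f \<Longrightarrow> in_l2h (\<lambda>j. c * f j)"
  by (rule in_l2h_bdd_mult[OF bdd_grid_const])

lemma in_l2h_uminus: "in_l2h f \<Longrightarrow> in_l2h (\<lambda>j. - f j)"
  using in_l2h_cmult[of f "- 1"] by simp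

lemma in_l2h_diff: "in_l2h f \<Longrightarrow> in_l2h g \<Longrightarrow> in_l2h (\<lambda>j. f j - g j)"
  using in_l2h_add[OF _ in_l2h_uminus, of f g] by simp

lemma in_l2h_divide: "in_l2h f \<Longrightarrow> in_l2h (\<lambda>j. f j / c)"
  using in_l2h_cmult[of f "1 / c"] by simp

lemma in_l2h_power: "in_l2h f \<Longrightarrow> in_l2h (\<lambda>j. f j ^ (n + 1))"
  using in_l2h_mult_bdd[OF _ bdd_grid_power[OF in_l2h_imp_bdd_grid]] by simp

lemma in_l2h_Dplus: "in_l2h f \<Longrightarrow> in_l2h (Dplus h f)"
  unfolding Dplus_def by (intro in_l2h_divide in_l2h_diff in_l2h_shift)

lemma in_l2h_Dminus: "in_l2h f \<Longrightarrow> in_l2h (Dminus h f)"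
  unfolding Dminus_def by (intro in_l2h_divide in_l2h_diff in_l2h_shift_left)

lemma in_l2h_Dzero: "in_l2h f \<Longrightarrow> in_l2h (Dzero h f)"
  unfolding Dzero_def by (intro in_l2h_divide in_l2h_diff in_l2h_shift in_l2h_shift_left)

lemma in_l2h_shiftp: "in_l2h f \<Longrightarrow> in_l2h (shiftp f)"
  unfolding shiftp_def by (rule in_l2h_shift)

lemma in_l2h_shiftm: "in_l2h f \<Longrightarrow> in_l2h (shiftm f)"
  unfolding shiftm_def by (rule in_l2h_shift_left)

lemma summable_on_mult:
  assumes "in_l2h f" "in_l2h g"
  shows "(\<lambda>j. f j * g j) summable_on UNIV"
proof -
  have bound: "(\<lambda>j. (f j)\<^sup>2 + (g j)\<^sup>2) summable_on UNIV"
    using assms unfolding in_l2h_def by (rule summable_on_add)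
  have "norm (f j * g j) \<le> (f j)\<^sup>2 + (g j)\<^sup>2" for j
  proof -
    have "2 * \<bar>f j * g j\<bar> \<le> (f j)\<^sup>2 + (g j)\<^sup>2"
      using zero_le_power2[of "\<bar>f j\<bar> - \<bar>g j\<bar>"] by (simp add: abs_mult power2_eq_square algebra_simps)
    then show ?thesis using abs_ge_zero[of "f j * g j"] by simp
  qed
  then have "(\<lambda>j. norm (f j * g j)) summable_on UNIV"
    by (intro summable_on_comparison_test[OF bound]) auto
  then show ?thesis by (rule abs_summable_summable)
qed

lemma summable_on_bdd_mult_mult:
  "bdd_grid b \<Longrightarrow> in_l2h f \<Longrightarrow> in_l2h g \<Longrightarrow> (\<lambda>j. b j * f j * g j) summable_on UNIV"
  using summable_on_mult[OF in_l2h_bdd_mult] by simp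

lemma infsum_sq_nonneg: "0 \<le> infsum (\<lambda>j. (f j)\<^sup>2) S"
  for f :: gridfun by (intro infsum_nonneg) simp

lemma infsum_sq_add_le:
  assumes "in_l2h f" "in_l2h g"
  shows "infsum (\<lambda>j. (f j + g j)\<^sup>2) UNIV \<le> 2 * infsum (\<lambda>j. (f j)\<^sup>2) UNIV + 2 * infsum (\<lambda>j. (g j)\<^sup>2) UNIV"
proof -
  have sf: "(\<lambda>j. (f j)\<^sup>2) summable_on UNIV" and sg: "(\<lambda>j. (g j)\<^sup>2) summable_on UNIV"
    using assms unfolding in_l2h_def by auto
  have "infsum (\<lambda>j. (f j + g j)\<^sup>2) UNIV \<le> infsum (\<lambda>j. 2 * (f j)\<^sup>2 + 2 * (g j)\<^sup>2) UNIV"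
  proof (rule infsum_mono)
    show "(\<lambda>j. (f j + g j)\<^sup>2) summable_on UNIV"
      using in_l2h_add[OF assms] unfolding in_l2h_def .
    show "(\<lambda>j. 2 * (f j)\<^sup>2 + 2 * (g j)\<^sup>2) summable_on UNIV"
      by (intro summable_on_add summable_on_cmult_right sf sg)
    show "(f j + g j)\<^sup>2 \<le> 2 * (f j)\<^sup>2 + 2 * (g j)\<^sup>2" for j
      using zero_le_power2[of "f j - g j"] by (simp add: power2_eq_square algebra_simps)
  qed
  also have "\<dots> = 2 * infsum (\<lambda>j. (f j)\<^sup>2) UNIV + 2 * infsum (\<lambda>j. (g j)\<^sup>2) UNIV"
    using sf sg by (simp add: infsum_add summable_on_cmult_right infsum_cmult_right)
  finally show ?thesis .
qed

lemma abs_infsum_weighted_sq_le: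
  assumes "in_l2h f" "\<And>j. \<bar>b j\<bar> \<le> M"
  shows "\<bar>infsum (\<lambda>j. b j * (f j)\<^sup>2) UNIV\<bar> \<le> M * infsum (\<lambda>j. (f j)\<^sup>2) UNIV"
proof -
  have sf: "(\<lambda>j. (f j)\<^sup>2) summable_on UNIV" using assms(1) unfolding in_l2h_def .
  have sb: "(\<lambda>j. b j * (f j)\<^sup>2) summable_on UNIV"
    using summable_on_mult[OF in_l2h_bdd_mult[OF bdd_gridI[OF assms(2)] assms(1)] assms(1)]
    by (simp add: power2_eq_square mult.assoc)
  have sM: "(\<lambda>j. M * (f j)\<^sup>2) summable_on UNIV" using sf by (rule summable_on_cmult_right)
  have pw: "\<bar>b j * (f j)\<^sup>2\<bar> \<le> M * (f j)\<^sup>2" for j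
    using assms(2)[of j] by (simp add: abs_mult mult_right_mono)
  have "infsum (\<lambda>j. b j * (f j)\<^sup>2) UNIV \<le> infsum (\<lambda>j. M * (f j)\<^sup>2) UNIV"
    using pw by (intro infsum_mono sb sM) (simp add: abs_le_iff)
  moreover have "infsum (\<lambda>j. - (M * (f j)\<^sup>2)) UNIV \<le> infsum (\<lambda>j. b j * (f j)\<^sup>2) UNIV"
  proof (rule infsum_mono[OF _ sb])
    show "(\<lambda>j. - (M * (f j)\<^sup>2)) summable_on UNIV" using sM by (simp add: summable_on_uminus)
    show "- (M * (f j)\<^sup>2) \<le> b j * (f j)\<^sup>2" for j using pw[of j] unfolding abs_le_iff by linarith
  qed
  moreover have "infsum (\<lambda>j. M * (f j)\<^sup>2) UNIV = M * infsum (\<lambda>j. (f j)\<^sup>2) UNIV"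
    by (rule infsum_cmult_right')
  ultimately show ?thesis by (simp add: infsum_uminus abs_le_iff)
qed

section \<open>Differentiating the weighted energy\<close>

lemma abs_infsum_mult_le:
  fixes f g :: gridfun
  assumes sf: "(\<lambda>j. (f j)\<^sup>2) summable_on S" and sg: "(\<lambda>j. (g j)\<^sup>2) summable_on S"
    and \<theta>: "\<theta> > 0"
  shows "\<bar>infsum (\<lambda>j. f j * g j) S\<bar>
           \<le> infsum (\<lambda>j. (f j)\<^sup>2) S / (2 * \<theta>) + \<theta> / 2 * infsum (\<lambda>j. (g j)\<^sup>2) S"
proof -
  define b where "b j = inverse (2 * \<theta>) * (f j)\<^sup>2 + \<theta> / 2 * (g j)\<^sup>2" for j
  have sb: "b summable_on S"
    unfolding b_def by (intro summable_on_add summable_on_cmult_right sf sg)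
  have pw: "\<bar>f j * g j\<bar> \<le> b j" for j
  proof -
    have "2 * \<theta> * \<bar>f j * g j\<bar> \<le> (f j)\<^sup>2 + \<theta>\<^sup>2 * (g j)\<^sup>2"
      using zero_le_power2[of "\<bar>f j\<bar> - \<theta> * \<bar>g j\<bar>"]
      by (simp add: abs_mult power2_diff power_mult_distrib algebra_simps)
    then show ?thesis
      using \<theta> unfolding b_def by (simp add: field_simps power2_eq_square)
  qed
  have abs_sum: "(\<lambda>j. norm (f j * g j)) summable_on S"
    by (rule summable_on_comparison_test[OF sb]) (use pw in auto)
  have "\<bar>infsum (\<lambda>j. f j * g j) S\<bar> \<le> infsum (\<lambda>j. \<bar>f j * g j\<bar>) S"
    using norm_infsum_bound[OF abs_sum] by simp
  also have "\<dots> \<le> infsum b S"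
    using abs_sum by (intro infsum_mono sb pw) simp
  also have "\<dots> = infsum (\<lambda>j. inverse (2 * \<theta>) * (f j)\<^sup>2) S + infsum (\<lambda>j. \<theta> / 2 * (g j)\<^sup>2) S"
    unfolding b_def by (intro infsum_add summable_on_cmult_right sf sg)
  also have "\<dots> = inverse (2 * \<theta>) * infsum (\<lambda>j. (f j)\<^sup>2) S + \<theta> / 2 * infsum (\<lambda>j. (g j)\<^sup>2) S"
    by (simp only: infsum_cmult_right')
  also have "\<dots> = infsum (\<lambda>j. (f j)\<^sup>2) S / (2 * \<theta>) + \<theta> / 2 * infsum (\<lambda>j. (g j)\<^sup>2) S"
    by (simp add: field_simps)
  finally show ?thesis .
qed

lemma infsum_mult_tendsto_zero:
  fixes a :: gridfun and d :: "'b \<Rightarrow> gridfun"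
  assumes a: "in_l2h a"
    and bounded: "\<forall>\<^sub>F s in F. in_l2h (d s) \<and> infsum (\<lambda>j. (d s j)\<^sup>2) UNIV \<le> C"
    and pointwise: "\<And>j. ((\<lambda>s. d s j) \<longlongrightarrow> 0) F"
  shows "((\<lambda>s. infsum (\<lambda>j. a j * d s j) UNIV) \<longlongrightarrow> 0) F"
proof (rule tendstoI)
  fix e :: real assume e: "e > 0"
  define \<theta> where "\<theta> = e / (2 * (\<bar>C\<bar> + 1))"
  have \<theta>: "\<theta> > 0" unfolding \<theta>_def using e by simp
  have \<theta>C: "\<theta> / 2 * C \<le> e / 4"
  proof -
    have "\<theta> / 2 * C = e / 4 * (C / (\<bar>C\<bar> + 1))"
      unfolding \<theta>_def by (simp add: field_simps)
    also have "\<dots> \<le> e / 4"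
    proof (rule mult_left_le)
      have "0 < \<bar>C\<bar> + 1" by (rule add_nonneg_pos) simp_all
      then show "C / (\<bar>C\<bar> + 1) \<le> 1" by (simp add: pos_divide_le_eq)
    qed (use e in simp)
    finally show ?thesis .
  qed
  have sa: "(\<lambda>j. (a j)\<^sup>2) summable_on UNIV" using a unfolding in_l2h_def .
  obtain J where J: "finite J"
    and J_approx: "dist (sum (\<lambda>j. (a j)\<^sup>2) J) (infsum (\<lambda>j. (a j)\<^sup>2) UNIV) \<le> \<theta> * e / 2"
    using infsum_finite_approximation[OF sa, of "\<theta> * e / 2"] \<theta> e by auto
  have tail_a: "infsum (\<lambda>j. (a j)\<^sup>2) (- J) \<le> \<theta> * e / 2"
    using infsum_split_finite[OF sa J] J_approx by (simp add: dist_real_def)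
  have head: "((\<lambda>s. \<Sum>j\<in>J. a j * d s j) \<longlongrightarrow> 0) F"
    by (intro tendsto_null_sum tendsto_mult_right_zero pointwise)
  have near: "\<forall>\<^sub>F s in F. dist (\<Sum>j\<in>J. a j * d s j) 0 < e / 2"
    by (rule tendstoD[OF head]) (use e in simp)
  show "\<forall>\<^sub>F s in F. dist (infsum (\<lambda>j. a j * d s j) UNIV) 0 < e"
    using near bounded
  proof eventually_elim
    case (elim s)
    then have sd: "(\<lambda>j. (d s j)\<^sup>2) summable_on UNIV" and dC: "infsum (\<lambda>j. (d s j)\<^sup>2) UNIV \<le> C"
      unfolding in_l2h_def by auto
    have tail_d: "infsum (\<lambda>j. (d s j)\<^sup>2) (- J) \<le> C"
      using infsum_split_finite[OF sd J] dC sum_nonneg[of J "\<lambda>j. (d s j)\<^sup>2"] by simp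
    have "\<bar>infsum (\<lambda>j. a j * d s j) (- J)\<bar>
        \<le> infsum (\<lambda>j. (a j)\<^sup>2) (- J) / (2 * \<theta>) + \<theta> / 2 * infsum (\<lambda>j. (d s j)\<^sup>2) (- J)"
      by (intro abs_infsum_mult_le summable_on_subset_banach[OF sa] summable_on_subset_banach[OF sd] \<theta>)
        auto
    also have "\<dots> \<le> (\<theta> * e / 2) / (2 * \<theta>) + \<theta> / 2 * C"
      using tail_a tail_d \<theta> by (intro add_mono mult_left_mono divide_right_mono) auto
    also have "\<dots> = e / 4 + \<theta> / 2 * C" using \<theta> by simp
    also have "\<dots> \<le> e / 2" using \<theta>C by linarith
    finally have tail: "\<bar>infsum (\<lambda>j. a j * d s j) (- J)\<bar> \<le> e / 2" .
    have "infsum (\<lambda>j. a j * d s j) UNIV = (\<Sum>j\<in>J. a j * d s j) + infsum (\<lambda>j. a j * d s j) (- J)"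
      using summable_on_mult[OF a] elim J by (intro infsum_split_finite) auto
    then show ?case using elim tail by (simp add: dist_real_def)
  qed
qed

lemma ipr_tendsto_weak:
  fixes a g :: gridfun and q :: "'b \<Rightarrow> gridfun"
  assumes a: "in_l2h a" and g: "in_l2h g"
    and bounded: "\<forall>\<^sub>F s in F. in_l2h (q s) \<and> infsum (\<lambda>j. (q s j)\<^sup>2) UNIV \<le> C"
    and pointwise: "\<And>j. ((\<lambda>s. q s j) \<longlongrightarrow> g j) F"
  shows "((\<lambda>s. ipr h a (q s)) \<longlongrightarrow> ipr h a g) F"
proof -
  have "((\<lambda>s. infsum (\<lambda>j. a j * (q s j - g j)) UNIV) \<longlongrightarrow> 0) F"
  proof (rule infsum_mult_tendsto_zero[OF a])
    show "\<forall>\<^sub>F s in F. in_l2h (\<lambda>j. q s j - g j)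
        \<and> infsum (\<lambda>j. (q s j - g j)\<^sup>2) UNIV \<le> 2 * C + 2 * infsum (\<lambda>j. (g j)\<^sup>2) UNIV"
      using bounded
    proof eventually_elim
      case (elim s)
      then have "infsum (\<lambda>j. (q s j + - g j)\<^sup>2) UNIV
          \<le> 2 * infsum (\<lambda>j. (q s j)\<^sup>2) UNIV + 2 * infsum (\<lambda>j. (- g j)\<^sup>2) UNIV"
        by (intro infsum_sq_add_le in_l2h_uminus g) simp
      then show ?case using elim in_l2h_diff[OF _ g] by simp
    qed
    show "((\<lambda>s. q s j - g j) \<longlongrightarrow> 0) F" for j
      using pointwise by (rule LIM_zero)
  qed
  moreover have "\<forall>\<^sub>F s in F. infsum (\<lambda>j. a j * (q s j - g j)) UNIV
      = infsum (\<lambda>j. a j * q s j) UNIV - infsum (\<lambda>j. a j * g j) UNIV"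
    using bounded
  proof eventually_elim
    case (elim s)
    then have "((\<lambda>j. a j * q s j - a j * g j) has_sum
        (infsum (\<lambda>j. a j * q s j) UNIV - infsum (\<lambda>j. a j * g j) UNIV)) UNIV"
      by (intro has_sum_diff has_sum_infsum summable_on_mult a g) simp
    then show ?case by (simp add: right_diff_distrib infsumI)
  qed
  ultimately have "((\<lambda>s. infsum (\<lambda>j. a j * q s j) UNIV) \<longlongrightarrow> infsum (\<lambda>j. a j * g j) UNIV) F"
    by (simp add: LIM_zero_iff tendsto_cong)
  then show ?thesis unfolding ipr_def by (rule tendsto_mult_left)
qed

lemma abs_ipr_weighted_le:
  assumes q: "in_l2h q" and M: "0 \<le> M" "\<And>j. \<bar>P j\<bar> \<le> M"
    and C: "infsum (\<lambda>j. (q j)\<^sup>2) UNIV \<le> C"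
  shows "\<bar>ipr h (\<lambda>j. P j * q j) q\<bar> \<le> \<bar>h\<bar> * (M * C)"
proof -
  have "\<bar>ipr h (\<lambda>j. P j * q j) q\<bar> = \<bar>h\<bar> * \<bar>infsum (\<lambda>j. P j * (q j)\<^sup>2) UNIV\<bar>"
    unfolding ipr_def by (simp add: abs_mult power2_eq_square mult.assoc)
  also have "\<dots> \<le> \<bar>h\<bar> * (M * C)"
    using abs_infsum_weighted_sq_le[where b = P, OF q M(2)] mult_left_mono[OF C M(1)]
    by (intro mult_left_mono) auto
  finally show ?thesis .
qed

lemma MVT_symmetric:
  fixes \<phi> :: "real \<Rightarrow> real"
  assumes deriv: "\<And>r. r \<in> {a<..<b} \<Longrightarrow> (\<phi> has_real_derivative \<phi>' r) (at r)"
    and s: "s \<in> {a<..<b}" and t: "t \<in> {a<..<b}"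
  obtains \<xi> where "\<xi> \<in> {a<..<b}" "\<phi> s - \<phi> t = (s - t) * \<phi>' \<xi>"
proof (cases s t rule: linorder_cases)
  case less
  then obtain \<xi> where "s < \<xi>" "\<xi> < t" "\<phi> t - \<phi> s = (t - s) * \<phi>' \<xi>"
    using MVT2[OF less, of \<phi> \<phi>'] deriv s t by force
  then show thesis using that[of \<xi>] s t by (auto simp: algebra_simps)
next
  case equal
  then show thesis using that[of t] t by simp
next
  case greater
  then obtain \<xi> where "t < \<xi>" "\<xi> < s" "\<phi> s - \<phi> t = (s - t) * \<phi>' \<xi>"
    using MVT2[OF greater, of \<phi> \<phi>'] deriv s t by force
  then show thesis using that[of \<xi>] s t by auto
qed

lemma infsum_sq_diff_le:
  fixes u u' :: "real \<Rightarrow> gridfun"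
  assumes deriv: "\<And>r j. r \<in> {a<..<b} \<Longrightarrow> ((\<lambda>s. u s j) has_real_derivative u' r j) (at r)"
    and l2: "\<And>r. r \<in> {a<..<b} \<Longrightarrow> in_l2h (u r)"
    and l2': "\<And>r. r \<in> {a<..<b} \<Longrightarrow> in_l2h (u' r)"
    and bound: "\<And>r. r \<in> {a<..<b} \<Longrightarrow> infsum (\<lambda>j. (u' r j)\<^sup>2) UNIV \<le> B"
    and s: "s \<in> {a<..<b}" and t: "t \<in> {a<..<b}"
  shows "infsum (\<lambda>j. (u s j - u t j)\<^sup>2) UNIV \<le> B * (s - t)\<^sup>2"
proof (rule infsum_le_finite_sums)
  show "(\<lambda>j. (u s j - u t j)\<^sup>2) summable_on UNIV"
    using in_l2h_diff[OF l2[OF s] l2[OF t]] unfolding in_l2h_def .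
  fix J :: "int set" assume J: "finite J"
  define c where "c j = u s j - u t j" for j
  have D: "\<And>r. r \<in> {a<..<b} \<Longrightarrow>
      ((\<lambda>r. \<Sum>j\<in>J. c j * u r j) has_real_derivative (\<Sum>j\<in>J. c j * u' r j)) (at r)"
    by (intro DERIV_sum DERIV_cmult deriv)
  obtain \<xi> where \<xi>: "\<xi> \<in> {a<..<b}"
    and mvt: "(\<Sum>j\<in>J. c j * u s j) - (\<Sum>j\<in>J. c j * u t j) = (s - t) * (\<Sum>j\<in>J. c j * u' \<xi> j)"
    by (rule MVT_symmetric[OF D s t])
  have "(\<Sum>j\<in>J. (c j)\<^sup>2) = (\<Sum>j\<in>J. (s - t) * (c j * u' \<xi> j))"
    using mvt by (simp add: c_def power2_eq_square sum_distrib_left sum_subtractf[symmetric] algebra_simps)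
  also have "\<dots> \<le> (\<Sum>j\<in>J. (c j)\<^sup>2 / 2 + (s - t)\<^sup>2 * (u' \<xi> j)\<^sup>2 / 2)"
  proof (rule sum_mono)
    have young: "x * y \<le> x\<^sup>2 / 2 + y\<^sup>2 / 2" for x y :: real
      using zero_le_power2[of "x - y"] unfolding power2_diff by linarith
    fix j
    show "(s - t) * (c j * u' \<xi> j) \<le> (c j)\<^sup>2 / 2 + (s - t)\<^sup>2 * (u' \<xi> j)\<^sup>2 / 2"
      using young[of "c j" "(s - t) * u' \<xi> j"] by (metis power_mult_distrib mult.left_commute)
  qed
  also have "\<dots> = (\<Sum>j\<in>J. (c j)\<^sup>2) / 2 + (s - t)\<^sup>2 * (\<Sum>j\<in>J. (u' \<xi> j)\<^sup>2) / 2"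
    by (simp add: sum.distrib sum_divide_distrib sum_distrib_left)
  finally have "(\<Sum>j\<in>J. (c j)\<^sup>2) \<le> (s - t)\<^sup>2 * (\<Sum>j\<in>J. (u' \<xi> j)\<^sup>2)"
    by simp
  also have "\<dots> \<le> (s - t)\<^sup>2 * B"
  proof (rule mult_left_mono)
    have "(\<Sum>j\<in>J. (u' \<xi> j)\<^sup>2) \<le> infsum (\<lambda>j. (u' \<xi> j)\<^sup>2) UNIV"
      using l2'[OF \<xi>] J unfolding in_l2h_def by (intro finite_sum_le_infsum) auto
    then show "(\<Sum>j\<in>J. (u' \<xi> j)\<^sup>2) \<le> B" using bound[OF \<xi>] by linarith
  qed simp
  finally show "(\<Sum>j\<in>J. (u s j - u t j)\<^sup>2) \<le> B * (s - t)\<^sup>2"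
    by (simp add: c_def mult.commute)
qed

lemma ipr_weighted_perturb:
  assumes P: "bdd_grid P" and v: "in_l2h v" and q: "in_l2h q"
  shows "ipr h (\<lambda>j. v j + c * q j) (\<lambda>j. P j * (v j + c * q j)) - ipr h v (\<lambda>j. P j * v j)
       = c * (2 * ipr h (\<lambda>j. P j * v j) q + c * ipr h (\<lambda>j. P j * q j) q)"
proof -
  have Pv: "in_l2h (\<lambda>j. P j * v j)" and Pq: "in_l2h (\<lambda>j. P j * q j)"
    using P v q by (auto intro: in_l2h_bdd_mult)
  have "((\<lambda>j. v j * (P j * v j) + c * (2 * (P j * v j * q j) + c * (P j * q j * q j))) has_sum
      (infsum (\<lambda>j. v j * (P j * v j)) UNIV
       + c * (2 * infsum (\<lambda>j. P j * v j * q j) UNIV + c * infsum (\<lambda>j. P j * q j * q j) UNIV))) UNIV"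
    by (intro has_sum_add has_sum_cmult_right has_sum_infsum summable_on_mult v q Pv Pq)
  moreover have "(\<lambda>j. v j * (P j * v j) + c * (2 * (P j * v j * q j) + c * (P j * q j * q j)))
      = (\<lambda>j. (v j + c * q j) * (P j * (v j + c * q j)))"
    by (simp add: fun_eq_iff algebra_simps)
  ultimately show ?thesis
    unfolding ipr_def by (simp add: infsumI algebra_simps)
qed

lemma weighted_energy_has_derivative:
  fixes u u' :: "real \<Rightarrow> gridfun"
  assumes P: "bdd_grid P" and \<delta>: "\<delta> > 0"
    and deriv: "\<And>r j. r \<in> {t - \<delta><..<t + \<delta>} \<Longrightarrow> ((\<lambda>s. u s j) has_real_derivative u' r j) (at r)"
    and l2: "\<And>r. r \<in> {t - \<delta><..<t + \<delta>} \<Longrightarrow> in_l2h (u r)"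
    and l2': "\<And>r. r \<in> {t - \<delta><..<t + \<delta>} \<Longrightarrow> in_l2h (u' r)"
    and bound: "\<And>r. r \<in> {t - \<delta><..<t + \<delta>} \<Longrightarrow> infsum (\<lambda>j. (u' r j)\<^sup>2) UNIV \<le> B"
  shows "((\<lambda>s. ipr h (u s) (\<lambda>j. P j * u s j)) has_real_derivative
           2 * ipr h (\<lambda>j. P j * u t j) (u' t)) (at t)"
proof -
  define I where "I = {t - \<delta><..<t + \<delta>}"
  define A where "A s = ipr h (u s) (\<lambda>j. P j * u s j)" for s
  define a where "a j = P j * u t j" for j
  define q where "q s j = (u s j - u t j) / (s - t)" for s j
  have t: "t \<in> I" unfolding I_def using \<delta> by simp
  have near: "\<forall>\<^sub>F s in at t. s \<in> I \<and> s \<noteq> t"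
    unfolding I_def eventually_at using \<delta> by (intro exI[of _ \<delta>]) (auto simp: dist_real_def)
  have ut: "in_l2h (u t)" and u't: "in_l2h (u' t)" using l2 l2' t unfolding I_def by simp_all
  have a: "in_l2h a" unfolding a_def using P ut by (rule in_l2h_bdd_mult)
  have q: "in_l2h (q s)" if "s \<in> I" for s
    unfolding q_def using that t I_def by (intro in_l2h_divide in_l2h_diff l2) auto
  have q_bound: "infsum (\<lambda>j. (q s j)\<^sup>2) UNIV \<le> B" if "s \<in> I" "s \<noteq> t" for s
  proof -
    have "(\<lambda>j. (u s j - u t j)\<^sup>2) summable_on UNIV"
      using that t in_l2h_diff[OF l2 l2] unfolding I_def in_l2h_def by auto
    then have "infsum (\<lambda>j. (q s j)\<^sup>2) UNIV = infsum (\<lambda>j. (u s j - u t j)\<^sup>2) UNIV / (s - t)\<^sup>2"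
      unfolding q_def power_divide by (intro infsumI has_sum_divide_const has_sum_infsum)
    also have "\<dots> \<le> B * (s - t)\<^sup>2 / (s - t)\<^sup>2"
      using that t unfolding I_def
      by (intro divide_right_mono infsum_sq_diff_le[OF deriv l2 l2' bound]) auto
    finally show ?thesis using that by simp
  qed
  have quotient: "(A s - A t) / (s - t) = 2 * ipr h a (q s) + (s - t) * ipr h (\<lambda>j. P j * q s j) (q s)"
    if "s \<in> I" "s \<noteq> t" for s
  proof -
    have "u s = (\<lambda>j. u t j + (s - t) * q s j)" using that by (simp add: fun_eq_iff q_def)
    then have "A s - A t = (s - t) * (2 * ipr h a (q s) + (s - t) * ipr h (\<lambda>j. P j * q s j) (q s))"
      unfolding A_def a_def using ipr_weighted_perturb[OF P ut q[OF that(1)], of h "s - t"] by simp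
    then show ?thesis using that by simp
  qed
  have bounded: "\<forall>\<^sub>F s in at t. in_l2h (q s) \<and> infsum (\<lambda>j. (q s j)\<^sup>2) UNIV \<le> B"
    using near by eventually_elim (simp add: q q_bound)
  have pointwise: "((\<lambda>s. q s j) \<longlongrightarrow> u' t j) (at t)" for j
    using deriv[of t j] t unfolding q_def I_def has_field_derivative_iff by blast
  have linear: "((\<lambda>s. ipr h a (q s)) \<longlongrightarrow> ipr h a (u' t)) (at t)"
    by (rule ipr_tendsto_weak[OF a u't bounded pointwise])
  obtain M where M: "0 \<le> M" "\<And>j. \<bar>P j\<bar> \<le> M" by (metis P bdd_gridE)
  have quadratic: "((\<lambda>s. (s - t) * ipr h (\<lambda>j. P j * q s j) (q s)) \<longlongrightarrow> 0) (at t)"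
  proof (rule Lim_null_comparison)
    show "\<forall>\<^sub>F s in at t. norm ((s - t) * ipr h (\<lambda>j. P j * q s j) (q s)) \<le> \<bar>s - t\<bar> * (\<bar>h\<bar> * (M * B))"
      using near
    proof eventually_elim
      case (elim s)
      then have "\<bar>ipr h (\<lambda>j. P j * q s j) (q s)\<bar> \<le> \<bar>h\<bar> * (M * B)"
        by (intro abs_ipr_weighted_le q M q_bound) auto
      then show ?case by (simp add: abs_mult mult_left_mono)
    qed
    show "((\<lambda>s. \<bar>s - t\<bar> * (\<bar>h\<bar> * (M * B))) \<longlongrightarrow> 0) (at t)"
      by (intro tendsto_mult_left_zero tendsto_rabs_zero LIM_zero tendsto_ident_at)
  qed
  have "((\<lambda>s. (A s - A t) / (s - t)) \<longlongrightarrow> 2 * ipr h a (u' t) + 0) (at t)"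
  proof (rule Lim_transform_eventually)
    show "((\<lambda>s. 2 * ipr h a (q s) + (s - t) * ipr h (\<lambda>j. P j * q s j) (q s)) \<longlongrightarrow> 2 * ipr h a (u' t) + 0) (at t)"
      by (intro tendsto_add tendsto_mult_left linear quadratic)
    show "\<forall>\<^sub>F s in at t. 2 * ipr h a (q s) + (s - t) * ipr h (\<lambda>j. P j * q s j) (q s) = (A s - A t) / (s - t)"
      using near by eventually_elim (simp add: quotient)
  qed
  then show ?thesis unfolding has_field_derivative_iff A_def a_def by simp
qed

section \<open>The scheme operator and its solutions\<close>

lemma in_l2h_Fop: "in_l2h v \<Longrightarrow> in_l2h (Fop k \<beta> h v)"
  unfolding Fop_def
  by (intro in_l2h_add in_l2h_cmult in_l2h_bdd_mult bdd_grid_power in_l2h_imp_bdd_grid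
      in_l2h_power in_l2h_Dplus in_l2h_Dzero in_l2h_Dminus)

lemma sum_stencil: "(\<Sum>i\<in>{-2..2::int}. g i) = g (-2) + g (-1) + g 0 + g 1 + g 2"
proof -
  have "{-2..2::int} = {-2, -1, 0, 1, 2}" by auto
  then show ?thesis by (simp add: add.assoc)
qed

lemma infsum_sq_le_stencil:
  fixes f g :: gridfun
  assumes f: "in_l2h f" and g: "in_l2h g"
    and g_le: "\<And>j. \<bar>g j\<bar> \<le> A * (\<Sum>i\<in>{-2..2}. \<bar>f (j + i)\<bar>)"
  shows "infsum (\<lambda>j. (g j)\<^sup>2) UNIV \<le> 25 * A\<^sup>2 * infsum (\<lambda>j. (f j)\<^sup>2) UNIV"
proof -
  have sf: "(\<lambda>j. (f j)\<^sup>2) summable_on UNIV" using f unfolding in_l2h_def .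
  have stencil: "((\<lambda>j. \<Sum>i\<in>{-2..2}. (f (j + i))\<^sup>2) has_sum
      (\<Sum>i\<in>{-2..2::int}. infsum (\<lambda>j. (f j)\<^sup>2) UNIV)) UNIV"
    by (intro has_sum_sum_family has_sum_shift[OF sf]) simp
  have pw: "(g j)\<^sup>2 \<le> 5 * A\<^sup>2 * (\<Sum>i\<in>{-2..2}. (f (j + i))\<^sup>2)" for j
  proof -
    let ?S = "\<Sum>i\<in>{-2..2}. \<bar>f (j + i)\<bar>"
    have "(g j)\<^sup>2 \<le> (A * ?S)\<^sup>2"
      using power_mono[OF g_le[of j] abs_ge_zero, of 2] by simp
    also have "\<dots> = A\<^sup>2 * ?S\<^sup>2" by (simp add: power_mult_distrib)
    also have "\<dots> \<le> A\<^sup>2 * (5 * (\<Sum>i\<in>{-2..2}. (f (j + i))\<^sup>2))"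
      using sum_squared_le_sum_of_squares[of "\<lambda>i. \<bar>f (j + i)\<bar>" "{-2..2}"]
      by (intro mult_left_mono) (simp_all add: mult.commute)
    finally show ?thesis by (simp add: mult.assoc)
  qed
  have "infsum (\<lambda>j. (g j)\<^sup>2) UNIV \<le> 5 * A\<^sup>2 * (\<Sum>i\<in>{-2..2::int}. infsum (\<lambda>j. (f j)\<^sup>2) UNIV)"
    using g unfolding in_l2h_def
    by (intro has_sum_mono[OF has_sum_infsum has_sum_cmult_right[OF stencil] pw])
  then show ?thesis by simp
qed

lemma abs_power_le: "\<bar>x\<bar> \<le> M \<Longrightarrow> \<bar>x ^ k\<bar> \<le> M ^ k"
  for x :: real by (simp add: power_abs power_mono)

lemma abs_Fop_le:
  assumes M: "\<And>i. \<bar>f i\<bar> \<le> M" and h: "h > 0"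
  shows "\<bar>Fop k \<beta> h f j\<bar> \<le> (6 / h ^ 3 + \<bar>\<beta>\<bar> * M ^ k / h) * (\<Sum>i\<in>{-2..2}. \<bar>f (j + i)\<bar>)"
proof -
  have M0: "0 \<le> M" using abs_ge_zero[of "f j"] M[of j] by linarith
  define c where "c = (real k + 1) / (real k + 2)"
  define x2 where "x2 = f (j + 2)"
  define x1 where "x1 = f (j + 1)"
  define x0 where "x0 = f j"
  define y1 where "y1 = f (j - 1)"
  define y2 where "y2 = f (j - 2)"
  define S where "S = \<bar>y2\<bar> + \<bar>y1\<bar> + \<bar>x0\<bar> + \<bar>x1\<bar> + \<bar>x2\<bar>"
  define N where "N = x0 ^ k * (x1 - y1) + (x1 ^ k * x1 - y1 ^ k * y1)"
  have idx: "j + 1 - 1 = j" "j + 1 - 2 = j - 1" "j - 1 + 1 = j" "j - 1 - 1 = j - 2" "j + 1 + 1 = j + 2"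
    "j + 1 - 1 - 1 = j - 1" "j - 1 + 1 + 1 = j + 1" "j + 1 + 1 - 1 = j + 1" "j - 1 - 1 + 1 = j - 1"
    "j + 1 - 1 + 1 = j + 1"
    by simp_all
  have Fop_eq: "Fop k \<beta> h f j = ((3/2) * x2 - 5 * x1 + 6 * x0 - 3 * y1 + (1/2) * y2) / h ^ 3
      + \<beta> * c * (N / (2 * h))"
    unfolding Fop_def Dplus_def Dminus_def Dzero_def c_def[symmetric] N_def x2_def x1_def x0_def y1_def y2_def
    using h by (simp add: idx field_simps power3_eq_cube)
  have linear: "\<bar>(3/2) * x2 - 5 * x1 + 6 * x0 - 3 * y1 + (1/2) * y2\<bar> \<le> 6 * S"
    unfolding S_def by (auto simp: abs_if)
  have "\<bar>N\<bar> \<le> M ^ k * (\<bar>x1\<bar> + \<bar>y1\<bar>) + M ^ k * \<bar>x1\<bar> + M ^ k * \<bar>y1\<bar>"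
  proof -
    have "\<bar>x0 ^ k * (x1 - y1)\<bar> \<le> M ^ k * (\<bar>x1\<bar> + \<bar>y1\<bar>)"
      unfolding abs_mult x0_def using abs_power_le[OF M] M0 by (intro mult_mono) auto
    moreover have "\<bar>x1 ^ k * x1\<bar> \<le> M ^ k * \<bar>x1\<bar>" "\<bar>y1 ^ k * y1\<bar> \<le> M ^ k * \<bar>y1\<bar>"
      unfolding abs_mult x1_def y1_def using abs_power_le[OF M] by (auto intro: mult_right_mono)
    ultimately show ?thesis unfolding N_def by linarith
  qed
  then have nonlinear: "\<bar>\<beta> * c * (N / (2 * h))\<bar> \<le> \<bar>\<beta>\<bar> * M ^ k / h * S"
  proof -
    assume N: "\<bar>N\<bar> \<le> M ^ k * (\<bar>x1\<bar> + \<bar>y1\<bar>) + M ^ k * \<bar>x1\<bar> + M ^ k * \<bar>y1\<bar>"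
    have c: "0 \<le> c" "c \<le> 1" unfolding c_def by simp_all
    have "\<bar>\<beta> * c * (N / (2 * h))\<bar> = \<bar>\<beta>\<bar> * (c * (\<bar>N\<bar> / (2 * h)))"
      using c h by (simp add: abs_mult abs_divide)
    also have "\<dots> \<le> \<bar>\<beta>\<bar> * (\<bar>N\<bar> / (2 * h))"
      using c h by (intro mult_left_mono mult_left_le_one_le) auto
    also have "\<dots> \<le> \<bar>\<beta>\<bar> * (M ^ k * S / h)"
    proof (intro mult_left_mono)
      have "\<bar>N\<bar> \<le> 2 * M ^ k * (\<bar>x1\<bar> + \<bar>y1\<bar>)" using N by (simp add: algebra_simps)
      also have "\<dots> \<le> 2 * M ^ k * S" unfolding S_def using M0 by (intro mult_left_mono) auto
      finally have "\<bar>N\<bar> \<le> 2 * (M ^ k * S)" by simp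
      then show "\<bar>N\<bar> / (2 * h) \<le> M ^ k * S / h" using h by (simp add: field_simps)
    qed simp
    finally show ?thesis by simp
  qed
  have "\<bar>Fop k \<beta> h f j\<bar> \<le> 6 * S / h ^ 3 + \<bar>\<beta>\<bar> * M ^ k / h * S"
    unfolding Fop_eq using linear nonlinear h
    by (intro order_trans[OF abs_triangle_ineq] add_mono) (simp_all add: abs_divide divide_right_mono)
  also have "\<dots> = (6 / h ^ 3 + \<bar>\<beta>\<bar> * M ^ k / h) * S"
    by (simp add: field_simps)
  also have "S = (\<Sum>i\<in>{-2..2}. \<bar>f (j + i)\<bar>)"
    unfolding S_def x2_def x1_def x0_def y1_def y2_def sum_stencil by (simp add: algebra_simps)
  finally show ?thesis .
qed

lemma infsum_Fop_sq_le:
  assumes f: "in_l2h f" and M: "\<And>i. \<bar>f i\<bar> \<le> M" and h: "h > 0"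
  shows "infsum (\<lambda>j. (Fop k \<beta> h f j)\<^sup>2) UNIV
           \<le> 25 * (6 / h ^ 3 + \<bar>\<beta>\<bar> * M ^ k / h)\<^sup>2 * infsum (\<lambda>j. (f j)\<^sup>2) UNIV"
  by (rule infsum_sq_le_stencil[OF f in_l2h_Fop[OF f] abs_Fop_le[OF M h]])

lemma is_solution_interior:
  assumes sol: "is_solution k \<beta> h T \<phi> u" and r: "r \<in> {0<..<T}"
  shows "in_l2h (u r)"
    and "((\<lambda>s. u s j) has_real_derivative - Fop k \<beta> h (u r) j) (at r)"
    and "((\<lambda>s. infsum (\<lambda>j. (u s j - u r j)\<^sup>2) UNIV) \<longlongrightarrow> 0) (at r)"
proof -
  have r': "r \<in> {0..<T}" using r by simp
  have at: "at r within {0..<T} = at r" using r by (intro at_within_interior) simp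
  from sol r' have "in_l2h (u r)"
    and "((\<lambda>s. u s j) has_real_derivative - Fop k \<beta> h (u r) j) (at r within {0..<T})"
    and "((\<lambda>s. infsum (\<lambda>j. (u s j - u r j)\<^sup>2) UNIV) \<longlongrightarrow> 0) (at r within {0..<T})"
    unfolding is_solution_def by auto
  then show "in_l2h (u r)"
    and "((\<lambda>s. u s j) has_real_derivative - Fop k \<beta> h (u r) j) (at r)"
    and "((\<lambda>s. infsum (\<lambda>j. (u s j - u r j)\<^sup>2) UNIV) \<longlongrightarrow> 0) (at r)"
    unfolding at by simp_all
qed

lemma is_solution_Fop_locally_bounded:
  assumes sol: "is_solution k \<beta> h T \<phi> u" and h: "h > 0" and t: "t \<in> {0<..<T}"
  obtains \<delta> B where "\<delta> > 0" "{t - \<delta><..<t + \<delta>} \<subseteq> {0<..<T}"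
    "\<And>r. r \<in> {t - \<delta><..<t + \<delta>} \<Longrightarrow> infsum (\<lambda>j. (Fop k \<beta> h (u r) j)\<^sup>2) UNIV \<le> B"
proof -
  have "\<forall>\<^sub>F s in at t. dist (infsum (\<lambda>j. (u s j - u t j)\<^sup>2) UNIV) 0 < 1"
    by (rule tendstoD[OF is_solution_interior(3)[OF sol t]]) simp
  then obtain d where d: "d > 0"
    and close: "\<And>s. s \<noteq> t \<Longrightarrow> \<bar>s - t\<bar> < d \<Longrightarrow> \<bar>infsum (\<lambda>j. (u s j - u t j)\<^sup>2) UNIV\<bar> < 1"
    unfolding eventually_at dist_real_def by auto
  define \<delta> where "\<delta> = min d (min t (T - t))"
  define K where "K = 2 + 2 * infsum (\<lambda>j. (u t j)\<^sup>2) UNIV"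
  define M where "M = sqrt K"
  have \<delta>: "\<delta> > 0" and sub: "{t - \<delta><..<t + \<delta>} \<subseteq> {0<..<T}"
    using d t unfolding \<delta>_def by auto
  have ut: "in_l2h (u t)" by (rule is_solution_interior(1)[OF sol t])
  have norm_le: "infsum (\<lambda>j. (u r j)\<^sup>2) UNIV \<le> K" if r: "r \<in> {t - \<delta><..<t + \<delta>}" for r
  proof (cases "r = t")
    case True
    then show ?thesis unfolding K_def using infsum_sq_nonneg[of "u t" UNIV] by simp
  next
    case False
    have ur: "in_l2h (u r)" using is_solution_interior(1)[OF sol] r sub by auto
    have "infsum (\<lambda>j. ((u r j - u t j) + u t j)\<^sup>2) UNIV
        \<le> 2 * infsum (\<lambda>j. (u r j - u t j)\<^sup>2) UNIV + 2 * infsum (\<lambda>j. (u t j)\<^sup>2) UNIV"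
      by (intro infsum_sq_add_le in_l2h_diff ur ut)
    moreover have "infsum (\<lambda>j. (u r j - u t j)\<^sup>2) UNIV < 1"
    proof -
      have "\<delta> \<le> d" unfolding \<delta>_def by simp
      then have "\<bar>r - t\<bar> < d" using r by (auto simp: abs_less_iff)
      then show ?thesis using close[OF False] by (simp add: abs_less_iff)
    qed
    ultimately show ?thesis unfolding K_def by simp
  qed
  have B: "infsum (\<lambda>j. (Fop k \<beta> h (u r) j)\<^sup>2) UNIV \<le> 25 * (6 / h ^ 3 + \<bar>\<beta>\<bar> * M ^ k / h)\<^sup>2 * K"
    if r: "r \<in> {t - \<delta><..<t + \<delta>}" for r
  proof -
    have ur: "in_l2h (u r)" using is_solution_interior(1)[OF sol] r sub by auto
    have "\<bar>u r i\<bar> \<le> M" for i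
      unfolding M_def using order_trans[OF sq_le_infsum[OF ur] norm_le[OF r]]
      by (metis real_sqrt_abs real_sqrt_le_mono)
    then show ?thesis
      using infsum_Fop_sq_le[OF ur _ h] norm_le[OF r]
      by (meson mult_left_mono order_trans zero_le_mult_iff zero_le_numeral zero_le_power2)
  qed
  show thesis using that[OF \<delta> sub B] .
qed

section \<open>Summation by parts\<close>

text \<open>The flux is obtained by summation by parts; its forward difference is the pointwise
  difference of the two sides of the identity (lemma below).\<close>

definition energy_flux :: "nat \<Rightarrow> real \<Rightarrow> real \<Rightarrow> gridfun \<Rightarrow> gridfun \<Rightarrow> gridfun" where
  "energy_flux k \<beta> h P v = (\<lambda>j.
     - (1/2) * \<beta> * ((real k + 1) / (real k + 2)) * (v (j - 1) ^ k * P j * v (j - 1) * v j)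
     - (1/2) * \<beta> * ((real k + 1) / (real k + 2)) * (v j ^ k * P (j - 1) * v (j - 1) * v j)
     + ((1/2) * P (j - 2) * v (j - 1) * v (j - 1) - (1/2) * P (j - 2) * v (j - 1) * v j
        - (3/2) * P (j - 1) * v (j - 1) * v (j - 1) + 3 * P (j - 1) * v (j - 1) * v j
        - (3/2) * P (j - 1) * v (j - 1) * v (j + 1) + (1/2) * P j * v (j - 2) * v j
        - (3/2) * P j * v (j - 1) * v j + P j * v j * v j) / h\<^sup>2)"

text \<open>The left-hand side is the summand of (left side \<open>-\<close> right side) of \<open>energy_identity\<close> with
  \<open>ipr\<close> unfolded, so that the \<open>has_sum\<close> rules apply term by term.\<close>

lemma energy_density_eq_flux_diff:
  assumes "h \<noteq> 0"
  shows "h * (P j * v j * - Fop k \<beta> h v j)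
      + h * (Dminus h v j * (Dplus h P j * Dminus h v j))
      + h * (Dplus h v j * (Dminus h P j * Dplus h v j)) / 2
      + h * (h * (Dplus h (Dminus h v) j * (P j * Dplus h (Dminus h v) j)))
    - (- (h / 2) * (h * (Dplus h (Dminus h v) j * (Dplus h P j * Dminus h v j)))
      + h / 2 * (h * (Dplus h v j * Dminus h P j * Dplus h (Dminus h v) j))
      - h * (Dminus h v j * (shiftm v j * Dzero h (Dminus h P) j))
      - h * (h * (Dplus h (Dminus h v) j * (Dminus h P j * Dminus h v j)))
      - h * (h * (Dplus h (Dminus h v) j * (Dplus h P j * Dplus h v j)))
      - h * (h * (Dplus h (Dminus h v) j * (v j * Dplus h (Dminus h P) j)))
      + \<beta> / 2 * ((real k + 1) / (real k + 2)) *
          (h * (v j ^ (k + 1) * (shiftp v j * Dplus h P j + shiftm v j * Dminus h P j))))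
    = energy_flux k \<beta> h P v (j + 1) - energy_flux k \<beta> h P v j"
proof -
  define c where "c = (real k + 1) / (real k + 2)"
  have idx: "j + 1 - 1 = j" "j + 1 - 2 = j - 1" "j - 1 + 1 = j" "j - 1 - 1 = j - 2" "j + 1 + 1 = j + 2"
    "j + 1 - 1 - 1 = j - 1" "j - 1 + 1 + 1 = j + 1"
    by simp_all
  show ?thesis
    unfolding energy_flux_def Fop_def Dplus_def Dminus_def Dzero_def shiftp_def shiftm_def c_def[symmetric]
    using assms
    by (simp only: idx power_add power_one_right) (simp add: field_simps power2_eq_square power3_eq_cube)
qed

lemma energy_identity:
  assumes v: "in_l2h v" and P: "bdd_grid P" and h: "h \<noteq> 0"
  shows "ipr h (\<lambda>j. P j * v j) (\<lambda>j. - Fop k \<beta> h v j)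
    + ipr h (Dminus h v) (\<lambda>j. Dplus h P j * Dminus h v j)
    + ipr h (Dplus h v) (\<lambda>j. Dminus h P j * Dplus h v j) / 2
    + h * ipr h (Dplus h (Dminus h v)) (\<lambda>j. P j * Dplus h (Dminus h v) j)
    = - (h / 2) * ipr h (Dplus h (Dminus h v)) (\<lambda>j. Dplus h P j * Dminus h v j)
      + (h / 2) * ipr h (\<lambda>j. Dplus h v j * Dminus h P j) (Dplus h (Dminus h v))
      - ipr h (Dminus h v) (\<lambda>j. shiftm v j * Dzero h (Dminus h P) j)
      - h * ipr h (Dplus h (Dminus h v)) (\<lambda>j. Dminus h P j * Dminus h v j)
      - h * ipr h (Dplus h (Dminus h v)) (\<lambda>j. Dplus h P j * Dplus h v j)
      - h * ipr h (Dplus h (Dminus h v)) (\<lambda>j. v j * Dplus h (Dminus h P) j)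
      + (\<beta> / 2) * ((real k + 1) / (real k + 2)) *
          ipr h (\<lambda>j. v j ^ (k + 1)) (\<lambda>j. shiftp v j * Dplus h P j + shiftm v j * Dminus h P j)"
    (is "?L = ?R")
proof -
  have bdd: "bdd_grid (Dplus h P)" "bdd_grid (Dminus h P)" "bdd_grid (Dzero h (Dminus h P))"
    "bdd_grid (Dplus h (Dminus h P))"
    using P by (simp_all add: bdd_grid_Dplus bdd_grid_Dminus bdd_grid_Dzero)
  have l2: "in_l2h (Dminus h v)" "in_l2h (Dplus h v)" "in_l2h (Dplus h (Dminus h v))"
    "in_l2h (\<lambda>j. P j * v j)" "in_l2h (\<lambda>j. - Fop k \<beta> h v j)"
    using v P by (auto intro: in_l2h_Dminus in_l2h_Dplus in_l2h_bdd_mult in_l2h_uminus in_l2h_Fop)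
  have l2_power: "in_l2h (\<lambda>j. v j ^ (k + 1))" using v by (rule in_l2h_power)
  have l2_shifts: "in_l2h (\<lambda>j. shiftp v j * Dplus h P j + shiftm v j * Dminus h P j)"
    by (intro in_l2h_add in_l2h_mult_bdd in_l2h_shiftp in_l2h_shiftm v bdd)
  have "((\<lambda>j. energy_flux k \<beta> h P v (j + 1) - energy_flux k \<beta> h P v j) has_sum (?L - ?R)) UNIV"
    unfolding energy_density_eq_flux_diff[OF h, symmetric] ipr_def
    by (intro has_sum_diff has_sum_add has_sum_cmult_right has_sum_divide_const has_sum_infsum
        summable_on_mult l2 l2_power l2_shifts in_l2h_bdd_mult in_l2h_mult_bdd bdd P v in_l2h_shiftm)
  moreover have "energy_flux k \<beta> h P v summable_on UNIV"
    using in_l2h_imp_bdd_grid[OF v] unfolding energy_flux_def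
    by (intro summable_on_add summable_on_diff summable_on_cmult_right summable_on_divide_const
        summable_on_bdd_mult_mult bdd_grid_mult bdd_grid_const bdd_grid_power bdd_grid_shift_left
        in_l2h_shift in_l2h_shift_left P v)
  ultimately show ?thesis using has_sum_unique[OF _ has_sum_telescope] by fastforce
qed

theorem lemma3p6:
  fixes k :: nat and \<beta> h T :: real and p :: "real \<Rightarrow> real"
    and \<phi> :: gridfun and u :: "real \<Rightarrow> gridfun" and t :: real
  assumes "k \<in> {1, 2}" and "\<beta> \<noteq> 0" and "h > 0"
    and "strict_mono p" and "smooth_bdd p"
    and "in_l2h \<phi>"
    and "T > 0" and "is_solution k \<beta> h T \<phi> u"
    and "t \<in> {0<..<T}"
  defines "P \<equiv> (\<lambda>j::int. p (real_of_int j * h))"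
  shows "\<exists>D. ((\<lambda>s. ipr h (u s) (\<lambda>j. P j * u s j)) has_real_derivative D) (at t) \<and>
    D / 2
    + ipr h (Dminus h (u t)) (\<lambda>j. Dplus h P j * Dminus h (u t) j)
    + ipr h (Dplus h (u t)) (\<lambda>j. Dminus h P j * Dplus h (u t) j) / 2
    + h * ipr h (Dplus h (Dminus h (u t))) (\<lambda>j. P j * Dplus h (Dminus h (u t)) j)
    = - (h / 2) * ipr h (Dplus h (Dminus h (u t))) (\<lambda>j. Dplus h P j * Dminus h (u t) j)
      + (h / 2) * ipr h (\<lambda>j. Dplus h (u t) j * Dminus h P j) (Dplus h (Dminus h (u t)))
      - ipr h (Dminus h (u t)) (\<lambda>j. shiftm (u t) j * Dzero h (Dminus h P) j)
      - h * ipr h (Dplus h (Dminus h (u t))) (\<lambda>j. Dminus h P j * Dminus h (u t) j)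
      - h * ipr h (Dplus h (Dminus h (u t))) (\<lambda>j. Dplus h P j * Dplus h (u t) j)
      - h * ipr h (Dplus h (Dminus h (u t))) (\<lambda>j. u t j * Dplus h (Dminus h P) j)
      + (\<beta> / 2) * ((real k + 1) / (real k + 2)) *
          ipr h (\<lambda>j. (u t j) ^ (k + 1))
                (\<lambda>j. shiftp (u t) j * Dplus h P j + shiftm (u t) j * Dminus h P j)"
proof -
  note sol = \<open>is_solution k \<beta> h T \<phi> u\<close> and h = \<open>h > 0\<close> and t = \<open>t \<in> {0<..<T}\<close>
  have P: "bdd_grid P"
  proof -
    have "bounded (range p)" using \<open>smooth_bdd p\<close> unfolding smooth_bdd_def by (metis funpow_0)
    then obtain M where "\<And>x. \<bar>p x\<bar> \<le> M" unfolding bounded_iff by auto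
    then show ?thesis unfolding P_def by (rule bdd_gridI)
  qed
  obtain \<delta> B where \<delta>: "\<delta> > 0" and sub: "{t - \<delta><..<t + \<delta>} \<subseteq> {0<..<T}"
    and B: "\<And>r. r \<in> {t - \<delta><..<t + \<delta>} \<Longrightarrow> infsum (\<lambda>j. (Fop k \<beta> h (u r) j)\<^sup>2) UNIV \<le> B"
    using is_solution_Fop_locally_bounded[OF sol h t] by blast
  have inside: "r \<in> {0<..<T}" if "r \<in> {t - \<delta><..<t + \<delta>}" for r
    using sub that by blast
  have "((\<lambda>s. ipr h (u s) (\<lambda>j. P j * u s j)) has_real_derivative
      2 * ipr h (\<lambda>j. P j * u t j) (\<lambda>j. - Fop k \<beta> h (u t) j)) (at t)"
    using B by (intro weighted_energy_has_derivative[OF P \<delta>] in_l2h_uminus in_l2h_Fop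
        is_solution_interior[OF sol inside]) simp_all
  then show ?thesis
    using energy_identity[OF is_solution_interior(1)[OF sol t] P, of h k \<beta>] h by auto
qed

end
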